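(* Let $F$ be a finite field of odd characteristic in which $-1$ is not a square, and let $g:F^3\to\mathbb{C}$ satisfy $g\sim 1$ on its support $G$. Then $$\|\widehat{g}\|_{L^2(P,d\sigma)} \lesssim \|g\|_{L^2(F^3)} + |G|^{3/8}\Big(\sum_{z\in F}\|g_z*K\|_{L^4(F^3)}^2 + \sum_{\substack{z,z'\in F\\ z\neq z'}}\big\|(g_z*K)\,(g_{z'}*K)\big\|_{L^2(F^3)}\Big)^{1/4}.$$
   Context: $e:(F,+)\to\mathbb{C}^\times$ is a fixed nontrivial additive character; $x\cdot y=\sum_i x_iy_i$ on $F^d$; points of $F^3$ are $x=(\underline{x},x_3)$, $\underline{x}\in F^2$. $P=\{(\underline{x},\underline{x}\cdot\underline{x}):\underline{x}\in F^2\}$. $F^3$ carries counting measure: $\|h\|_{L^p(F^3)}=(\sum_x|h(x)|^p)^{1/p}$, $(h_1*h_2)(x)=\sum_{y\in F^3}h_1(y)h_2(x-y)$. $(d\sigma)^{\vee}(x)=|F|^{-2}\sum_{\xi\in P}e(x\cdot\xi)$, $\delta$ is the indicator of $0\in F^3$, and $K:=(d\sigma)^{\vee}-\delta$. $\widehat{g}(\xi)=\sum_{x\in F^3}g(x)e(-x\cdot\xi)$, $\|\widehat{g}\|_{L^2(P,d\sigma)}=(|F|^{-2}\sum_{\xi\in P}|\widehat{g}(\xi)|^2)^{1/2}$. "$g\sim1$ on its support $G$" means $G=\{x:g(x)\ne0\}$ and $\tfrac12\le|g|\le2$ on $G$. For $z\in F$, $g_z(x)=g(x)$ if $x_3=z$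 and $g_z(x)=0$ otherwise. $X\lesssim Y$ means $X\le CY$ with $C$ an absolute constant independent of $F$ and $g$. *)

theory Defs
  imports Complex_Main "HOL-Algebra.Ring"
begin

text \<open>A finite field is represented as a HOL-Algebra structure R :: nat ring whose carrier
  is a finite set of naturals (every finite field is isomorphic to one of these); this lets the
  implicit constant be quantified before all fields.\<close>

type_synonym pt = "nat \<times> nat \<times> nat"

definition ring_char :: "nat ring \<Rightarrow> nat" where
  "ring_char R = (LEAST n::nat. n > 0 \<and> add_pow R n \<one>\<^bsub>R\<^esub> = \<zero>\<^bsub>R\<^esub>)"

definition carrier3 :: "nat ring \<Rightarrow> pt set" where
  "carrier3 R = carrier R \<times> carrier R \<times> carrier R"

definition dot3 :: "nat ring \<Rightarrow> pt \<Rightarrow> pt \<Rightarrow> nat" where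
  "dot3 R x y = (case x of (x1,x2,x3) \<Rightarrow> case y of (y1,y2,y3) \<Rightarrow>
      (x1 \<otimes>\<^bsub>R\<^esub> y1) \<oplus>\<^bsub>R\<^esub> (x2 \<otimes>\<^bsub>R\<^esub> y2) \<oplus>\<^bsub>R\<^esub> (x3 \<otimes>\<^bsub>R\<^esub> y3))"

definition sub3 :: "nat ring \<Rightarrow> pt \<Rightarrow> pt \<Rightarrow> pt" where
  "sub3 R x y = (case x of (x1,x2,x3) \<Rightarrow> case y of (y1,y2,y3) \<Rightarrow>
      (x1 \<ominus>\<^bsub>R\<^esub> y1, x2 \<ominus>\<^bsub>R\<^esub> y2, x3 \<ominus>\<^bsub>R\<^esub> y3))"

definition nontrivial_additive_char :: "nat ring \<Rightarrow> (nat \<Rightarrow> complex) \<Rightarrow> bool" where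
  "nontrivial_additive_char R e \<longleftrightarrow>
     (\<forall>x\<in>carrier R. \<forall>y\<in>carrier R. e (x \<oplus>\<^bsub>R\<^esub> y) = e x * e y)
     \<and> (\<exists>x\<in>carrier R. e x \<noteq> 1)"

definition parab :: "nat ring \<Rightarrow> pt set" where
  "parab R = {(a, b, (a \<otimes>\<^bsub>R\<^esub> a) \<oplus>\<^bsub>R\<^esub> (b \<otimes>\<^bsub>R\<^esub> b)) | a b. a \<in> carrier R \<and> b \<in> carrier R}"

definition dsigma_check :: "nat ring \<Rightarrow> (nat \<Rightarrow> complex) \<Rightarrow> pt \<Rightarrow> complex" where
  "dsigma_check R e x = (1 / of_nat (card (carrier R))^2) * (\<Sum>\<xi>\<in>parab R. e (dot3 R x \<xi>))"

definition delta0 :: "nat ring \<Rightarrow> pt \<Rightarrow> complex" where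
  "delta0 R x = (if x = (\<zero>\<^bsub>R\<^esub>, \<zero>\<^bsub>R\<^esub>, \<zero>\<^bsub>R\<^esub>) then 1 else 0)"

definition Kker :: "nat ring \<Rightarrow> (nat \<Rightarrow> complex) \<Rightarrow> pt \<Rightarrow> complex" where
  "Kker R e x = dsigma_check R e x - delta0 R x"

definition fhat :: "nat ring \<Rightarrow> (nat \<Rightarrow> complex) \<Rightarrow> (pt \<Rightarrow> complex) \<Rightarrow> pt \<Rightarrow> complex" where
  "fhat R e g \<xi> = (\<Sum>x\<in>carrier3 R. g x * e (\<ominus>\<^bsub>R\<^esub> dot3 R x \<xi>))"

definition conv3 :: "nat ring \<Rightarrow> (pt \<Rightarrow> complex) \<Rightarrow> (pt \<Rightarrow> complex) \<Rightarrow> pt \<Rightarrow> complex" where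
  "conv3 R h1 h2 x = (\<Sum>y\<in>carrier3 R. h1 y * h2 (sub3 R x y))"

definition Lp_norm :: "nat ring \<Rightarrow> real \<Rightarrow> (pt \<Rightarrow> complex) \<Rightarrow> real" where
  "Lp_norm R p h = (\<Sum>x\<in>carrier3 R. cmod (h x) powr p) powr (1 / p)"

definition L2_sigma_norm :: "nat ring \<Rightarrow> (pt \<Rightarrow> complex) \<Rightarrow> real" where
  "L2_sigma_norm R f = sqrt ((1 / real (card (carrier R))^2) * (\<Sum>\<xi>\<in>parab R. (cmod (f \<xi>))^2))"

definition supp3 :: "nat ring \<Rightarrow> (pt \<Rightarrow> complex) \<Rightarrow> pt set" where
  "supp3 R g = {x \<in> carrier3 R. g x \<noteq> 0}"

definition sim_one :: "nat ring \<Rightarrow> (pt \<Rightarrow> complex) \<Rightarrow> bool" where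
  "sim_one R g \<longleftrightarrow> (\<forall>x\<in>supp3 R g. 1/2 \<le> cmod (g x) \<and> cmod (g x) \<le> 2)"

definition slice :: "(pt \<Rightarrow> complex) \<Rightarrow> nat \<Rightarrow> pt \<Rightarrow> complex" where
  "slice g z x = (if snd (snd x) = z then g x else 0)"

end

theory Submission
  imports Defs "HOL-Analysis.L2_Norm"
begin

text \<open>Expanding the square and summing over the paraboloid first gives
  \<open>\<parallel>\<widehat>g\<parallel>\<^sup>2 = \<langle>g, g * (d\<sigma>)\<^sup>\<or>\<rangle> = \<parallel>g\<parallel>\<^sub>2\<^sup>2 + \<langle>g, g * K\<rangle>\<close>.
  Since \<open>|g| \<le> 2\<close> on \<open>G\<close>, Hoelder bounds the cross term by \<open>2 |G|^(3/4) \<parallel>g * K\<parallel>\<^sub>4\<close>.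
  Finally \<open>g * K = \<Sum>\<^sub>z g\<^sub>z * K\<close>, so by Minkowski
  \<open>\<parallel>g * K\<parallel>\<^sub>4\<^sup>2 = \<parallel>|g * K|\<^sup>2\<parallel>\<^sub>2 \<le> \<Sum>\<^sub>z\<^sub>,\<^sub>z\<^sub>' \<parallel>(g\<^sub>z * K) (g\<^sub>z\<^sub>' * K)\<parallel>\<^sub>2\<close>, whose diagonal
  terms are \<open>\<parallel>g\<^sub>z * K\<parallel>\<^sub>4\<^sup>2\<close>.\<close>

lemma mem_carrier3_iff:
  "x \<in> carrier3 R \<longleftrightarrow> fst x \<in> carrier R \<and> fst (snd x) \<in> carrier R \<and> snd (snd x) \<in> carrier R"
  by (cases x) (auto simp: carrier3_def)

lemma finite_carrier3: "finite (carrier R) \<Longrightarrow> finite (carrier3 R)"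
  by (simp add: carrier3_def)

lemma dot3_closed:
  "ring R \<Longrightarrow> x \<in> carrier3 R \<Longrightarrow> y \<in> carrier3 R \<Longrightarrow> dot3 R x y \<in> carrier R"
  by (cases x; cases y) (auto simp: carrier3_def dot3_def ring.ring_simprules)

lemma parab_subset_carrier3: "ring R \<Longrightarrow> parab R \<subseteq> carrier3 R"
  by (auto simp: carrier3_def parab_def ring.ring_simprules)

lemma dot3_sub3:
  assumes "cring R" and "x \<in> carrier3 R" "y \<in> carrier3 R" "\<xi> \<in> carrier3 R"
  shows "(\<ominus>\<^bsub>R\<^esub> dot3 R y \<xi>) \<oplus>\<^bsub>R\<^esub> dot3 R x \<xi> = dot3 R (sub3 R x y) \<xi>"
proof -
  interpret cring R by fact
  show ?thesis
    using assms(2-4) by (cases x; cases y; cases \<xi>) (simp add: dot3_def sub3_def carrier3_def; algebra)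
qed

lemma sub3_eq_zero_iff:
  assumes "ring R" and "x \<in> carrier3 R" "y \<in> carrier3 R"
  shows "sub3 R x y = (\<zero>\<^bsub>R\<^esub>, \<zero>\<^bsub>R\<^esub>, \<zero>\<^bsub>R\<^esub>) \<longleftrightarrow> x = y"
proof -
  interpret ring R by fact
  have "a \<ominus>\<^bsub>R\<^esub> b = \<zero>\<^bsub>R\<^esub> \<longleftrightarrow> a = b" if "a \<in> carrier R" "b \<in> carrier R" for a b
    using that by (metis a_minus_def add.inv_closed minus_equality r_neg)
  then show ?thesis
    using assms(2,3) by (cases x; cases y) (auto simp: sub3_def carrier3_def)
qed

definition additive_char :: "('a, 'm) ring_scheme \<Rightarrow> ('a \<Rightarrow> complex) \<Rightarrow> bool" where
  "additive_char R e \<longleftrightarrow> (\<forall>x\<in>carrier R. \<forall>y\<in>carrier R. e (x \<oplus>\<^bsub>R\<^esub> y) = e x * e y)"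

lemma nontrivial_additive_char_imp_additive_char:
  "nontrivial_additive_char R e \<Longrightarrow> additive_char R e"
  by (simp add: nontrivial_additive_char_def additive_char_def)

lemma additive_char_add:
  "additive_char R e \<Longrightarrow> x \<in> carrier R \<Longrightarrow> y \<in> carrier R \<Longrightarrow> e (x \<oplus>\<^bsub>R\<^esub> y) = e x * e y"
  by (simp add: additive_char_def)

context ring
begin

lemma additive_char_zero_cases:
  assumes "additive_char R e"
  shows "e \<zero> = 0 \<or> e \<zero> = 1"
proof -
  have "e \<zero> = e \<zero> * e \<zero>"
    using additive_char_add[OF assms, of \<zero> \<zero>] by simp
  then show ?thesis by (metis mult_cancel_left1)
qed

lemma additive_char_vanishes:
  assumes "additive_char R e" "e \<zero> = 0" "x \<in> carrier R"
  shows "e x = 0"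
  using additive_char_add[OF assms(1), of x \<zero>] assms(2,3) by simp

lemma additive_char_mult_neg:
  assumes "additive_char R e" "e \<zero> = 1" "x \<in> carrier R"
  shows "e x * e (\<ominus> x) = 1"
  using additive_char_add[OF assms(1), of x "\<ominus> x"] assms(2,3) by (simp add: r_neg)

text \<open>The largest value \<open>M\<close> of \<open>|e|\<close> satisfies \<open>M\<^sup>2 = |e(a + a)| \<le> M\<close> and \<open>M \<ge> |e 0| = 1\<close>.\<close>
lemma additive_char_norm_le_1:
  assumes "finite (carrier R)" "additive_char R e" "e \<zero> = 1" "x \<in> carrier R"
  shows "cmod (e x) \<le> 1"
proof -
  define M where "M = Max ((\<lambda>x. cmod (e x)) ` carrier R)"
  have le_M: "cmod (e y) \<le> M" if "y \<in> carrier R" for y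
    unfolding M_def using assms(1) that by auto
  have "M \<in> (\<lambda>x. cmod (e x)) ` carrier R"
    unfolding M_def using assms(1) by (intro Max_in) auto
  then obtain a where a: "a \<in> carrier R" "cmod (e a) = M" by blast
  have "1 \<le> M" using le_M[of \<zero>] assms(3) by simp
  moreover have "M * M \<le> M"
    using le_M[of "a \<oplus> a"] additive_char_add[OF assms(2) a(1) a(1)] a by (simp add: norm_mult)
  ultimately have "M \<le> 1" by (simp add: mult_le_cancel_left1)
  then show ?thesis using le_M[OF assms(4)] by simp
qed

lemma additive_char_cnj:
  assumes "finite (carrier R)" "additive_char R e" "e \<zero> = 1" "x \<in> carrier R"
  shows "cnj (e x) = e (\<ominus> x)"
proof -
  have inv: "e x * e (\<ominus> x) = 1" by (rule additive_char_mult_neg[OF assms(2-4)])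
  have "cmod (e x) \<le> 1" "cmod (e (\<ominus> x)) \<le> 1"
    using additive_char_norm_le_1[OF assms(1-3)] assms(4) add.inv_closed[OF assms(4)] by blast+
  moreover have "cmod (e x) * cmod (e (\<ominus> x)) = 1"
    using arg_cong[OF inv, of cmod] by (simp only: norm_mult norm_one)
  ultimately have "cmod (e x) = 1"
    using mult_left_le[of "cmod (e (\<ominus> x))" "cmod (e x)"] by simp
  then have unit: "e x * cnj (e x) = 1" using complex_norm_square[of "e x"] by simp
  have "cnj (e x) = cnj (e x) * (e x * e (\<ominus> x))" using inv by simp
  also have "\<dots> = (e x * cnj (e x)) * e (\<ominus> x)" by (simp only: mult_ac)
  finally show ?thesis using unit by simp
qed

end

lemma card_carrier_gt_0: "ring R \<Longrightarrow> finite (carrier R) \<Longrightarrow> card (carrier R) > 0"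
  using ring.ring_simprules(2) card_gt_0_iff by blast

lemma Re_mult_cnj: "Re (z * cnj z) = (cmod z)\<^sup>2"
  using cmod_power2[of z] by (simp add: power2_eq_square)

lemma sum_parab_norm_fhat_sq:
  assumes "cring R" "finite (carrier R)" "additive_char R e" "e \<zero>\<^bsub>R\<^esub> = 1"
  shows "(\<Sum>\<xi>\<in>parab R. fhat R e g \<xi> * cnj (fhat R e g \<xi>))
     = of_nat (card (carrier R)) ^ 2 * (\<Sum>x\<in>carrier3 R. cnj (g x) * conv3 R g (dsigma_check R e) x)"
proof -
  interpret cring R by fact
  let ?A = "carrier3 R" and ?P = "parab R"
  have "ring R" ..
  have PA: "?P \<subseteq> ?A" by (rule parab_subset_carrier3) fact
  have phase: "e (\<ominus>\<^bsub>R\<^esub> dot3 R y \<xi>) * cnj (e (\<ominus>\<^bsub>R\<^esub> dot3 R x \<xi>)) = e (dot3 R (sub3 R x y) \<xi>)"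
    if "x \<in> ?A" "y \<in> ?A" "\<xi> \<in> ?A" for x y \<xi>
  proof -
    have dx: "dot3 R x \<xi> \<in> carrier R" and dy: "dot3 R y \<xi> \<in> carrier R"
      using that dot3_closed[OF \<open>ring R\<close>] by auto
    have "cnj (e (\<ominus>\<^bsub>R\<^esub> dot3 R x \<xi>)) = e (dot3 R x \<xi>)"
      using additive_char_cnj[OF assms(2-4), of "\<ominus>\<^bsub>R\<^esub> dot3 R x \<xi>"] dx by simp
    then show ?thesis
      using additive_char_add[OF assms(3), of "\<ominus>\<^bsub>R\<^esub> dot3 R y \<xi>" "dot3 R x \<xi>"] dx dy
        dot3_sub3[OF assms(1) that] by simp
  qed
  have "fhat R e g \<xi> * cnj (fhat R e g \<xi>)
      = (\<Sum>x\<in>?A. \<Sum>y\<in>?A. cnj (g x) * g y * e (dot3 R (sub3 R x y) \<xi>))" if "\<xi> \<in> ?A" for \<xi>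
    unfolding fhat_def cnj_sum sum_product
    by (subst sum.swap) (intro sum.cong refl, simp add: phase[symmetric] that algebra_simps)
  then have "(\<Sum>\<xi>\<in>?P. fhat R e g \<xi> * cnj (fhat R e g \<xi>))
      = (\<Sum>\<xi>\<in>?P. \<Sum>x\<in>?A. \<Sum>y\<in>?A. cnj (g x) * g y * e (dot3 R (sub3 R x y) \<xi>))"
    using PA by (intro sum.cong refl) auto
  also have "\<dots> = (\<Sum>x\<in>?A. \<Sum>y\<in>?A. \<Sum>\<xi>\<in>?P. cnj (g x) * g y * e (dot3 R (sub3 R x y) \<xi>))"
    by (subst sum.swap) (simp add: sum.swap[of _ ?P])
  also have "\<dots> = of_nat (card (carrier R)) ^ 2 * (\<Sum>x\<in>?A. cnj (g x) * conv3 R g (dsigma_check R e) x)"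
    using card_carrier_gt_0[OF \<open>ring R\<close> assms(2)] unfolding conv3_def dsigma_check_def
    by (simp add: sum_distrib_left algebra_simps)
  finally show ?thesis .
qed

lemma conv3_dsigma_check:
  assumes "ring R" "finite (carrier R)" "x \<in> carrier3 R"
  shows "conv3 R g (dsigma_check R e) x = g x + conv3 R g (Kker R e) x"
proof -
  have "(\<Sum>y\<in>carrier3 R. g y * delta0 R (sub3 R x y)) = (\<Sum>y\<in>carrier3 R. if y = x then g y else 0)"
    by (intro sum.cong refl) (auto simp: delta0_def sub3_eq_zero_iff[OF assms(1,3)])
  also have "\<dots> = g x" using assms(3) finite_carrier3[OF assms(2)] by simp
  finally show ?thesis
    unfolding conv3_def Kker_def by (simp add: algebra_simps sum_subtractf)
qed

lemma sq_powr: "0 \<le> x \<Longrightarrow> (x powr a)\<^sup>2 = x powr (2 * a)" for x :: real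
  by (simp add: powr_powr mult.commute flip: powr_numeral)

lemma Lp_norm_2_eq_L2_set: "Lp_norm R 2 f = L2_set (\<lambda>x. cmod (f x)) (carrier3 R)"
  unfolding Lp_norm_def L2_set_def by (simp add: powr_half_sqrt sum_nonneg)

lemma Lp_norm_2_sq: "(Lp_norm R 2 f)\<^sup>2 = (\<Sum>x\<in>carrier3 R. (cmod (f x))\<^sup>2)"
  unfolding Lp_norm_2_eq_L2_set L2_set_def by (simp add: sum_nonneg)

lemma Lp_norm_4_eq: "Lp_norm R 4 f = (\<Sum>x\<in>carrier3 R. (cmod (f x)) ^ 4) powr (1/4)"
  unfolding Lp_norm_def by (simp add: powr_numeral)

lemma Lp_norm_4_sq: "(Lp_norm R 4 f)\<^sup>2 = L2_set (\<lambda>x. (cmod (f x))\<^sup>2) (carrier3 R)"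
  unfolding Lp_norm_4_eq L2_set_def
  by (simp add: sq_powr powr_half_sqrt sum_nonneg power_mult[symmetric])

lemma L2_sigma_norm_fhat_sq:
  assumes "cring R" "finite (carrier R)" "additive_char R e" "e \<zero>\<^bsub>R\<^esub> = 1"
  shows "(L2_sigma_norm R (fhat R e g))\<^sup>2
     = (Lp_norm R 2 g)\<^sup>2 + Re (\<Sum>x\<in>carrier3 R. cnj (g x) * conv3 R g (Kker R e) x)"
proof -
  have "ring R" using assms(1) by (rule cring.axioms)
  let ?N = "card (carrier R)" and ?cross = "\<Sum>x\<in>carrier3 R. cnj (g x) * conv3 R g (Kker R e) x"
  have split: "(\<Sum>x\<in>carrier3 R. cnj (g x) * conv3 R g (dsigma_check R e) x)
      = (\<Sum>x\<in>carrier3 R. g x * cnj (g x)) + ?cross"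
    unfolding sum.distrib[symmetric]
    by (intro sum.cong refl)
      (simp add: conv3_dsigma_check[OF \<open>ring R\<close> assms(2)] distrib_left mult.commute)
  have Re_scale: "Re (of_nat ?N ^ 2 * w) = real ?N ^ 2 * Re w" for w by simp
  have "(\<Sum>\<xi>\<in>parab R. (cmod (fhat R e g \<xi>))\<^sup>2) = Re (\<Sum>\<xi>\<in>parab R. fhat R e g \<xi> * cnj (fhat R e g \<xi>))"
    unfolding Re_sum Re_mult_cnj ..
  also have "\<dots> = real ?N ^ 2 * ((Lp_norm R 2 g)\<^sup>2 + Re ?cross)"
    unfolding sum_parab_norm_fhat_sq[OF assms] Re_scale split plus_complex.sel Re_sum Re_mult_cnj
      Lp_norm_2_sq ..
  finally have sum_eq: "(\<Sum>\<xi>\<in>parab R. (cmod (fhat R e g \<xi>))\<^sup>2)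
      = real ?N ^ 2 * ((Lp_norm R 2 g)\<^sup>2 + Re ?cross)" .
  moreover have "0 \<le> (\<Sum>\<xi>\<in>parab R. (cmod (fhat R e g \<xi>))\<^sup>2)" by (simp add: sum_nonneg)
  ultimately have "0 \<le> (Lp_norm R 2 g)\<^sup>2 + Re ?cross"
    using card_carrier_gt_0[OF \<open>ring R\<close> assms(2)] by (simp add: zero_le_mult_iff)
  then show ?thesis
    unfolding L2_sigma_norm_def sum_eq using card_carrier_gt_0[OF \<open>ring R\<close> assms(2)] by simp
qed

lemma L2_sigma_norm_fhat_eq_0:
  assumes "ring R" "additive_char R e" "e \<zero>\<^bsub>R\<^esub> = 0"
  shows "L2_sigma_norm R (fhat R e g) = 0"
proof -
  interpret ring R by fact
  have "e (\<ominus>\<^bsub>R\<^esub> dot3 R x \<xi>) = 0" if "x \<in> carrier3 R" "\<xi> \<in> parab R" for x \<xi>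
  proof -
    have "\<xi> \<in> carrier3 R" using that(2) parab_subset_carrier3[OF assms(1)] by auto
    then show ?thesis
      by (intro additive_char_vanishes[OF assms(2,3)] add.inv_closed dot3_closed[OF assms(1) that(1)])
  qed
  then have "fhat R e g \<xi> = 0" if "\<xi> \<in> parab R" for \<xi>
    unfolding fhat_def using that by (intro sum.neutral ballI) simp
  then show ?thesis unfolding L2_sigma_norm_def by simp
qed

lemma conv3_eq_sum_slices:
  assumes "finite (carrier R)"
  shows "conv3 R g K x = (\<Sum>z\<in>carrier R. conv3 R (slice g z) K x)"
proof -
  have "g y = (\<Sum>z\<in>carrier R. slice g z y)" if "y \<in> carrier3 R" for y
    using that assms by (simp add: slice_def mem_carrier3_iff)
  then have "conv3 R g K x = (\<Sum>y\<in>carrier3 R. \<Sum>z\<in>carrier R. slice g z y * K (sub3 R x y))"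
    unfolding conv3_def by (intro sum.cong refl) (simp add: sum_distrib_right)
  then show ?thesis unfolding conv3_def by (simp add: sum.swap[of _ "carrier3 R"])
qed

lemma L2_set_sum_le:
  assumes "finite Z"
  shows "L2_set (\<lambda>x. \<Sum>z\<in>Z. f z x) A \<le> (\<Sum>z\<in>Z. L2_set (f z) A)"
  using assms
proof (induction Z rule: finite_induct)
  case (insert a Z)
  have "L2_set (\<lambda>x. \<Sum>z\<in>insert a Z. f z x) A = L2_set (\<lambda>x. f a x + (\<Sum>z\<in>Z. f z x)) A"
    using insert by simp
  also have "\<dots> \<le> L2_set (f a) A + L2_set (\<lambda>x. \<Sum>z\<in>Z. f z x) A" by (rule L2_set_triangle_ineq)
  also have "\<dots> \<le> L2_set (f a) A + (\<Sum>z\<in>Z. L2_set (f z) A)" using insert by simp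
  finally show ?case using insert by simp
qed (simp add: L2_set_def)

lemma L2_set_norm_sum_sq_le:
  fixes f :: "'z \<Rightarrow> 'a \<Rightarrow> 'b::real_normed_div_algebra"
  assumes "finite Z"
  shows "L2_set (\<lambda>x. (norm (\<Sum>z\<in>Z. f z x))\<^sup>2) A \<le> (\<Sum>z\<in>Z. \<Sum>z'\<in>Z. L2_set (\<lambda>x. norm (f z x * f z' x)) A)"
proof -
  have "(norm (\<Sum>z\<in>Z. f z x))\<^sup>2 \<le> (\<Sum>z\<in>Z. \<Sum>z'\<in>Z. norm (f z x * f z' x))" for x
  proof -
    have "(norm (\<Sum>z\<in>Z. f z x))\<^sup>2 \<le> (\<Sum>z\<in>Z. norm (f z x))\<^sup>2"
      by (intro power_mono norm_sum) simp
    also have "\<dots> = (\<Sum>z\<in>Z. \<Sum>z'\<in>Z. norm (f z x * f z' x))"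
      unfolding power2_eq_square sum_product by (simp add: norm_mult)
    finally show ?thesis .
  qed
  then have "L2_set (\<lambda>x. (norm (\<Sum>z\<in>Z. f z x))\<^sup>2) A
      \<le> L2_set (\<lambda>x. \<Sum>z\<in>Z. \<Sum>z'\<in>Z. norm (f z x * f z' x)) A"
    by (intro L2_set_mono) simp_all
  also have "\<dots> \<le> (\<Sum>z\<in>Z. L2_set (\<lambda>x. \<Sum>z'\<in>Z. norm (f z x * f z' x)) A)"
    by (rule L2_set_sum_le[OF assms])
  also have "\<dots> \<le> (\<Sum>z\<in>Z. \<Sum>z'\<in>Z. L2_set (\<lambda>x. norm (f z x * f z' x)) A)"
    by (intro sum_mono L2_set_sum_le[OF assms])
  finally show ?thesis .
qed

lemma Lp_norm_4_conv3_sq_le_slices: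
  assumes "finite (carrier R)"
  shows "(Lp_norm R 4 (conv3 R g K))\<^sup>2
     \<le> (\<Sum>z\<in>carrier R. (Lp_norm R 4 (conv3 R (slice g z) K))\<^sup>2)
       + (\<Sum>z\<in>carrier R. \<Sum>z'\<in>carrier R - {z}.
            Lp_norm R 2 (\<lambda>x. conv3 R (slice g z) K x * conv3 R (slice g z') K x))"
proof -
  let ?h = "\<lambda>z. conv3 R (slice g z) K"
  let ?N = "\<lambda>z z'. Lp_norm R 2 (\<lambda>x. ?h z x * ?h z' x)"
  have diag: "?N z z = (Lp_norm R 4 (?h z))\<^sup>2" for z
    unfolding Lp_norm_2_eq_L2_set Lp_norm_4_sq by (simp only: norm_mult power2_eq_square)
  have "(Lp_norm R 4 (conv3 R g K))\<^sup>2 \<le> (\<Sum>z\<in>carrier R. \<Sum>z'\<in>carrier R. ?N z z')"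
    unfolding Lp_norm_4_sq Lp_norm_2_eq_L2_set conv3_eq_sum_slices[OF assms, of g K]
    by (rule L2_set_norm_sum_sq_le[OF assms])
  also have "\<dots> = (\<Sum>z\<in>carrier R. ?N z z + (\<Sum>z'\<in>carrier R - {z}. ?N z z'))"
    using assms by (intro sum.cong refl sum.remove)
  also have "\<dots> = (\<Sum>z\<in>carrier R. (Lp_norm R 4 (?h z))\<^sup>2) + (\<Sum>z\<in>carrier R. \<Sum>z'\<in>carrier R - {z}. ?N z z')"
    unfolding diag sum.distrib ..
  finally show ?thesis .
qed

lemma sum_norm_le_card_powr_L4:
  fixes h :: "'a \<Rightarrow> 'b::real_normed_vector"
  assumes "finite B" "G \<subseteq> B"
  shows "(\<Sum>x\<in>G. norm (h x)) \<le> real (card G) powr (3/4) * (\<Sum>x\<in>B. norm (h x) ^ 4) powr (1/4)"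
proof -
  let ?c = "real (card G)" and ?Q = "\<Sum>x\<in>B. norm (h x) ^ 4" and ?L = "L2_set (\<lambda>x. norm (h x)) G"
  have Q: "?Q \<ge> 0" by (simp add: sum_nonneg)
  have "?L\<^sup>2 = (\<Sum>x\<in>G. \<bar>1\<bar> * \<bar>(norm (h x))\<^sup>2\<bar>)"
    by (simp add: L2_set_def sum_nonneg)
  also have "\<dots> \<le> sqrt ?c * L2_set (\<lambda>x. (norm (h x))\<^sup>2) G"
    using L2_set_mult_ineq[of "\<lambda>_. 1::real" "\<lambda>x. (norm (h x))\<^sup>2" G] by (simp add: L2_set_constant)
  also have "\<dots> \<le> sqrt ?c * sqrt ?Q"
  proof -
    have "(\<Sum>x\<in>G. norm (h x) ^ 4) \<le> ?Q" using assms by (intro sum_mono2) simp_all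
    then show ?thesis unfolding L2_set_def by (simp add: mult_left_mono power_mult[symmetric])
  qed
  also have "\<dots> = (?c powr (1/4) * ?Q powr (1/4))\<^sup>2"
    using Q by (simp add: power_mult_distrib sq_powr powr_half_sqrt)
  finally have L: "?L \<le> ?c powr (1/4) * ?Q powr (1/4)"
    by (rule power2_le_imp_le) simp
  have "(\<Sum>x\<in>G. norm (h x)) \<le> sqrt ?c * ?L"
    using L2_set_mult_ineq[of "\<lambda>_. 1::real" "\<lambda>x. norm (h x)" G] by (simp add: L2_set_constant)
  also have "\<dots> \<le> sqrt ?c * (?c powr (1/4) * ?Q powr (1/4))"
    using L by (rule mult_left_mono) simp
  also have "\<dots> = ?c powr (1/2) * (?c powr (1/4) * ?Q powr (1/4))"
    by (simp add: powr_half_sqrt)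
  also have "\<dots> = ?c powr (3/4) * ?Q powr (1/4)"
    by (simp add: mult.assoc[symmetric] flip: powr_add)
  finally show ?thesis .
qed

lemma Re_sum_cnj_mult_le:
  fixes g h :: "'a \<Rightarrow> complex"
  assumes "finite B" "G \<subseteq> B" "\<And>x. x \<in> B - G \<Longrightarrow> g x = 0" "\<And>x. x \<in> G \<Longrightarrow> cmod (g x) \<le> 2"
  shows "Re (\<Sum>x\<in>B. cnj (g x) * h x)
    \<le> 2 * (real (card G) powr (3/4) * (\<Sum>x\<in>B. cmod (h x) ^ 4) powr (1/4))"
proof -
  have "Re (\<Sum>x\<in>B. cnj (g x) * h x) \<le> cmod (\<Sum>x\<in>B. cnj (g x) * h x)"
    by (rule complex_Re_le_cmod)
  also have "\<dots> \<le> (\<Sum>x\<in>B. cmod (g x) * cmod (h x))"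
    by (rule order_trans[OF norm_sum]) (simp add: norm_mult)
  also have "\<dots> = (\<Sum>x\<in>G. cmod (g x) * cmod (h x))"
    using assms(1-3) by (intro sum.mono_neutral_right) auto
  also have "\<dots> \<le> (\<Sum>x\<in>G. 2 * cmod (h x))"
    using assms(4) by (intro sum_mono mult_right_mono) auto
  also have "\<dots> \<le> 2 * (real (card G) powr (3/4) * (\<Sum>x\<in>B. cmod (h x) ^ 4) powr (1/4))"
    unfolding sum_distrib_left[symmetric]
    using sum_norm_le_card_powr_L4[OF assms(1,2), of h] by simp
  finally show ?thesis .
qed

lemma Lp_norm_nonneg: "0 \<le> Lp_norm R p f"
  by (simp add: Lp_norm_def)

lemma L2_sigma_norm_fhat_le:
  assumes "cring R" "finite (carrier R)" "additive_char R e" "sim_one R g"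
  defines "S \<equiv> (\<Sum>z\<in>carrier R. (Lp_norm R 4 (conv3 R (slice g z) (Kker R e))) ^ 2)
      + (\<Sum>z\<in>carrier R. \<Sum>z'\<in>carrier R - {z}.
           Lp_norm R 2 (\<lambda>x. conv3 R (slice g z) (Kker R e) x * conv3 R (slice g z') (Kker R e) x))"
  shows "L2_sigma_norm R (fhat R e g)
    \<le> 2 * (Lp_norm R 2 g + real (card (supp3 R g)) powr (3/8) * S powr (1/4))"
    (is "_ \<le> 2 * (?a + ?b)")
proof -
  interpret cring R by fact
  have "ring R" ..
  have rhs_nonneg: "0 \<le> 2 * (?a + ?b)" by (simp add: Lp_norm_nonneg)
  consider "e \<zero>\<^bsub>R\<^esub> = 0" | "e \<zero>\<^bsub>R\<^esub> = 1" using additive_char_zero_cases[OF assms(3)] by blast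
  then show ?thesis
  proof cases
    case 1
    then show ?thesis using L2_sigma_norm_fhat_eq_0[OF \<open>ring R\<close> assms(3)] rhs_nonneg by simp
  next
    case 2
    let ?h = "conv3 R g (Kker R e)" and ?n = "real (card (supp3 R g))"
    have L4_sq: "(Lp_norm R 4 ?h)\<^sup>2 \<le> S"
      unfolding S_def by (rule Lp_norm_4_conv3_sq_le_slices[OF assms(2)])
    then have L4: "Lp_norm R 4 ?h \<le> sqrt S" by (rule real_le_rsqrt)
    have "0 \<le> S" using L4_sq by (rule order_trans[OF zero_le_power2])
    have "Re (\<Sum>x\<in>carrier3 R. cnj (g x) * ?h x) \<le> 2 * (?n powr (3/4) * Lp_norm R 4 ?h)"
      unfolding Lp_norm_4_eq using assms(4) finite_carrier3[OF assms(2)]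
      by (intro Re_sum_cnj_mult_le) (auto simp: sim_one_def supp3_def)
    also have "\<dots> \<le> 2 * (?n powr (3/4) * sqrt S)"
      using L4 by (simp add: mult_left_mono)
    also have "\<dots> = 2 * ?b\<^sup>2"
      using \<open>0 \<le> S\<close> by (simp add: power_mult_distrib sq_powr powr_half_sqrt)
    finally have "(L2_sigma_norm R (fhat R e g))\<^sup>2 \<le> ?a\<^sup>2 + 2 * ?b\<^sup>2"
      unfolding L2_sigma_norm_fhat_sq[OF assms(1-3) 2] by simp
    also have "\<dots> \<le> (2 * (?a + ?b))\<^sup>2"
      using Lp_norm_nonneg[of R 2 g] by (simp add: power2_eq_square algebra_simps)
    finally show ?thesis using rhs_nonneg by (rule power2_le_imp_le)
  qed
qed

theorem mainTheorem3:
  "\<exists>C::real. \<forall>(R::nat ring) (e::nat \<Rightarrow> complex) (g::pt \<Rightarrow> complex).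
     field R \<and> finite (carrier R) \<and> odd (ring_char R)
     \<and> \<not> (\<exists>x\<in>carrier R. x \<otimes>\<^bsub>R\<^esub> x = \<ominus>\<^bsub>R\<^esub> \<one>\<^bsub>R\<^esub>)
     \<and> nontrivial_additive_char R e \<and> sim_one R g
     \<longrightarrow> L2_sigma_norm R (fhat R e g)
         \<le> C * (Lp_norm R 2 g + real (card (supp3 R g)) powr (3/8) *
              ((\<Sum>z\<in>carrier R. (Lp_norm R 4 (conv3 R (slice g z) (Kker R e))) ^ 2)
               + (\<Sum>z\<in>carrier R. \<Sum>z'\<in>carrier R - {z}.
                    Lp_norm R 2 (\<lambda>x. conv3 R (slice g z) (Kker R e) x * conv3 R (slice g z') (Kker R e) x)))
              powr (1/4))"
  by (intro exI[of _ 2] allI impI) (blast intro: L2_sigma_norm_fhat_le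
      nontrivial_additive_char_imp_additive_char domain.axioms(1) field.axioms(1))

end
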